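(* Assume (A1) and $b\ne0$. Define the equivalence relation $j\sim k$ on $[K]$ by $x(I_j,b)=x(I_k,b)$, with equivalence classes $\mathcal B_1,\dots,\mathcal B_T$. Then there exists $\epsilon>0$ such that for every $\tilde b\in\mathbb{R}^m$ with $P(\tilde b)\ne\emptyset$ and $\|\tilde b-b\|<\epsilon$, and for every $1\le t\le T$, there exists $k\in\mathcal B_t$ with $x(I_k,\tilde b)\in OPT(\tilde b)$.
   Context: $A\in\mathbb{R}^{m\times d}$ of full rank $m\le d$, $b\in\mathbb{R}^m$, $c\in\mathbb{R}^d$. For $\beta\in\mathbb{R}^m$, $(\mathrm{P}_\beta)$ is $\min c^Tx$ s.t. $Ax=\beta,x\ge0$, $P(\beta)=\{x:Ax=\beta,x\ge0\}$, and $OPT(\beta)$ its optimal set. A basis is $I\subseteq[d]$, $|I|=m$, $A_I$ invertible; $x(I,\beta)$ has coordinates $(A_I)^{-1}\beta$ on $I$ and $0$ elsewhere; $\lambda(I)=(A_I)^{-T}c_I$; $I$ is dual feasible if $A^T\lambda(I)\le c$. $I_1,\dots,I_K$ are exactly the dual feasible bases with $x(I_k,b)\ge0$. (A1): $OPT(b)$ is non-empty and bounded. *)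

theory Defs
  imports "Jordan_Normal_Form.DL_Rank" "Jordan_Normal_Form.DL_Submatrix"
begin

text \<open>Linear programs  min c^T x  s.t.  A x = beta, x \<ge> 0, with A an m x d real matrix
  (JNF matrices, columns indexed 0..d-1).\<close>

definition col_submat :: "real mat \<Rightarrow> nat set \<Rightarrow> real mat" where
  "col_submat A I = submatrix A UNIV I"

definition minv :: "real mat \<Rightarrow> real mat" where
  "minv B = (SOME C. inverts_mat B C \<and> inverts_mat C B)"

definition is_basis :: "real mat \<Rightarrow> nat set \<Rightarrow> bool" where
  "is_basis A I \<longleftrightarrow> I \<subseteq> {..<dim_col A} \<and> card I = dim_row A \<and> invertible_mat (col_submat A I)"

text \<open>x(I,beta): (A_I)^{-1} beta on the coordinates I (in increasing order), 0 elsewhere.\<close>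
definition basic_sol :: "real mat \<Rightarrow> nat set \<Rightarrow> real vec \<Rightarrow> real vec" where
  "basic_sol A I \<beta> = vec (dim_col A)
     (\<lambda>j. if j \<in> I then (minv (col_submat A I) *\<^sub>v \<beta>) $ card {i \<in> I. i < j} else 0)"

definition restrict_vec :: "real vec \<Rightarrow> nat set \<Rightarrow> real vec" where
  "restrict_vec c I = vec (card I) (\<lambda>i. c $ pick I i)"

definition dual_mult :: "real mat \<Rightarrow> real vec \<Rightarrow> nat set \<Rightarrow> real vec" where
  "dual_mult A c I = transpose_mat (minv (col_submat A I)) *\<^sub>v restrict_vec c I"

definition dual_feasible :: "real mat \<Rightarrow> real vec \<Rightarrow> nat set \<Rightarrow> bool" where
  "dual_feasible A c I \<longleftrightarrow> transpose_mat A *\<^sub>v dual_mult A c I \<le> c"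

definition feas_set :: "real mat \<Rightarrow> real vec \<Rightarrow> real vec set" where
  "feas_set A \<beta> = {x. x \<in> carrier_vec (dim_col A) \<and> A *\<^sub>v x = \<beta> \<and> 0\<^sub>v (dim_col A) \<le> x}"

definition opt_set :: "real mat \<Rightarrow> real vec \<Rightarrow> real vec \<Rightarrow> real vec set" where
  "opt_set A c \<beta> = {x \<in> feas_set A \<beta>. \<forall>y \<in> feas_set A \<beta>. c \<bullet> x \<le> c \<bullet> y}"

definition vnorm :: "real vec \<Rightarrow> real" where
  "vnorm v = sqrt (\<Sum>i<dim_vec v. (v $ i)^2)"

definition vbounded :: "real vec set \<Rightarrow> bool" where
  "vbounded S \<longleftrightarrow> (\<exists>M. \<forall>x \<in> S. vnorm x \<le> M)"

text \<open>The set {I_1,...,I_K} of dual feasible bases I with x(I,b) \<ge> 0.\<close>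
definition opt_bases :: "real mat \<Rightarrow> real vec \<Rightarrow> real vec \<Rightarrow> nat set set" where
  "opt_bases A b c = {I. is_basis A I \<and> dual_feasible A c I \<and> 0\<^sub>v (dim_col A) \<le> basic_sol A I b}"

end

theory Submission
  imports Defs "HOL-Computational_Algebra.Polynomial"
begin

text \<open>
  Fix an optimal basis \<open>J\<close> at \<open>b\<close> and let \<open>S\<close> be the support of \<open>x(J,b)\<close>. Adding to \<open>c\<close> a
  small multiple of a generic cost vector vanishing on \<open>J\<close> makes every reduced cost of every basis
  nonzero, keeps \<open>J\<close> dual feasible, and creates no dual feasible bases that were not dual feasible
  for \<open>c\<close>. For the perturbed costs, a basis \<open>I \<supseteq> S\<close> maximising the dual objective at \<open>b'\<close>
  among the dual feasible ones has \<open>x(I,b')\<^sub>k \<ge> 0\<close> for \<open>k \<notin> S\<close>: otherwise a dual simplex pivot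
  with leaving index \<open>k\<close> would increase the objective strictly. On \<open>S\<close> the coordinates of
  \<open>x(I,b') = (A\<^sub>I)\<^sup>-\<^sup>1 b'\<close> are close to those of \<open>x(I,b) = x(J,b) > 0\<close>, uniformly over the finitely
  many bases. Hence \<open>x(I,b')\<close> is feasible and \<open>I\<close> is dual feasible for \<open>c\<close>, so \<open>x(I,b')\<close> is
  optimal, and \<open>I\<close> lies in the class of \<open>J\<close>.
\<close>

definition scatter_vec :: "nat \<Rightarrow> nat set \<Rightarrow> 'a :: zero vec \<Rightarrow> 'a vec" where
  "scatter_vec d I u = vec d (\<lambda>j. if j \<in> I then u $ card {i \<in> I. i < j} else 0)"

definition supported_on :: "nat \<Rightarrow> nat set \<Rightarrow> 'a :: zero vec \<Rightarrow> bool" where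
  "supported_on d I x \<longleftrightarrow> x \<in> carrier_vec d \<and> (\<forall>j<d. j \<notin> I \<longrightarrow> x $ j = 0)"

definition reduced_cost :: "real mat \<Rightarrow> real vec \<Rightarrow> nat set \<Rightarrow> nat \<Rightarrow> real" where
  "reduced_cost A c I j = c $ j - col A j \<bullet> dual_mult A c I"

definition basic_direction :: "real mat \<Rightarrow> nat set \<Rightarrow> nat \<Rightarrow> real vec" where
  "basic_direction A I j = unit_vec (dim_col A) j - basic_sol A I (col A j)"

lemma card_less_than_member_less_card:
  fixes I :: "nat set"
  assumes "finite I" "j \<in> I" shows "card {i \<in> I. i < j} < card I"
proof -
  have "{i \<in> I. i < j} \<subset> I" using assms(2) by force
  then show ?thesis using assms(1) by (rule psubset_card_mono[rotated])
qed

lemma scatter_vec_carrier [simp]: "scatter_vec d I u \<in> carrier_vec d"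
  unfolding scatter_vec_def by simp

lemma supported_on_scatter_vec: "supported_on d I (scatter_vec d I u)"
  unfolding supported_on_def scatter_vec_def by simp

lemma supported_on_diff:
  fixes x y :: "'a :: ab_group_add vec"
  shows "supported_on d I x \<Longrightarrow> supported_on d I y \<Longrightarrow> supported_on d I (x - y)"
  unfolding supported_on_def by auto

lemma scatter_vec_index_pick:
  assumes "I \<subseteq> {..<d}" "k < card I"
  shows "scatter_vec d I u $ pick I k = u $ k"
proof -
  have "pick I k \<in> I" "card {i \<in> I. i < pick I k} = k"
    using assms pick_in_set_le card_pick_le by auto
  then show ?thesis using assms(1) unfolding scatter_vec_def by auto
qed

lemma scatter_vec_gather:
  assumes I: "I \<subseteq> {..<d}" "card I = m" and x: "supported_on d I x"
  shows "x = scatter_vec d I (vec m (\<lambda>k. x $ pick I k))"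
proof (rule eq_vecI)
  have fin: "finite I" using I finite_subset by blast
  fix j assume "j < dim_vec (scatter_vec d I (vec m (\<lambda>k. x $ pick I k)))"
  then have j: "j < d" by (simp add: scatter_vec_def)
  show "x $ j = scatter_vec d I (vec m (\<lambda>k. x $ pick I k)) $ j"
  proof (cases "j \<in> I")
    case True
    then show ?thesis using j I card_less_than_member_less_card[OF fin True] pick_card_in_set[OF True]
      unfolding scatter_vec_def by simp
  qed (use j x in \<open>auto simp: scatter_vec_def supported_on_def\<close>)
next
  show "dim_vec x = dim_vec (scatter_vec d I (vec m (\<lambda>k. x $ pick I k)))"
    using x by (simp add: supported_on_def scatter_vec_def)
qed

lemma scatter_vec_zero:
  assumes "finite I" "card I = m" shows "scatter_vec d I (0\<^sub>v m :: 'a :: zero vec) = 0\<^sub>v d"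
  using card_less_than_member_less_card[OF assms(1)] assms(2)
  unfolding scatter_vec_def by (intro eq_vecI) auto

lemma minv_inverse:
  assumes B: "B \<in> carrier_mat n n" and inv: "invertible_mat B"
  shows "minv B \<in> carrier_mat n n" "B * minv B = 1\<^sub>m n" "minv B * B = 1\<^sub>m n"
proof -
  have "\<exists>C. inverts_mat B C \<and> inverts_mat C B" using inv unfolding invertible_mat_def by blast
  then have "inverts_mat B (minv B) \<and> inverts_mat (minv B) B"
    unfolding minv_def by (rule someI_ex)
  then have 1: "B * minv B = 1\<^sub>m n" and 2: "minv B * B = 1\<^sub>m (dim_row (minv B))"
    using B unfolding inverts_mat_def by auto
  have "dim_col (minv B) = n" using arg_cong[OF 1, of dim_col] B by simp
  moreover have "dim_row (minv B) = n" using arg_cong[OF 2, of dim_col] B by simp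
  ultimately show "minv B \<in> carrier_mat n n" by auto
  then show "B * minv B = 1\<^sub>m n" "minv B * B = 1\<^sub>m n" using 1 2 by auto
qed

lemma mult_mat_vec_scalar_prod:
  fixes A :: "'a :: comm_ring_1 mat"
  assumes A: "A \<in> carrier_mat m d" and x: "x \<in> carrier_vec d" and y: "y \<in> carrier_vec m"
  shows "(A *\<^sub>v x) \<bullet> y = (\<Sum>j<d. x $ j * (col A j \<bullet> y))"
proof -
  have "(A *\<^sub>v x) \<bullet> y = (transpose_mat A *\<^sub>v y) \<bullet> x"
    using transpose_vec_mult_scalar[OF A x y] comm_scalar_prod[of "A *\<^sub>v x" m y] A x y by simp
  also have "\<dots> = (\<Sum>j<d. x $ j * (col A j \<bullet> y))"
    using A x by (simp add: scalar_prod_def atLeast0LessThan mult.commute)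
  finally show ?thesis .
qed

lemma mult_mat_vec_index_sum:
  assumes A: "A \<in> carrier_mat m d" and x: "x \<in> carrier_vec d" and i: "i < m"
  shows "(A *\<^sub>v x) $ i = (\<Sum>l<d. A $$ (i,l) * x $ l)"
  using A x i by (simp add: scalar_prod_def atLeast0LessThan)

lemma abs_index_le_vnorm:
  assumes "l < dim_vec v" shows "\<bar>v $ l\<bar> \<le> vnorm v"
proof -
  have "(v $ l)\<^sup>2 \<le> (\<Sum>i<dim_vec v. (v $ i)\<^sup>2)" using assms by (intro member_le_sum) auto
  then have "sqrt ((v $ l)\<^sup>2) \<le> vnorm v" unfolding vnorm_def by (rule real_sqrt_le_mono)
  then show ?thesis by simp
qed

lemma vnorm_nonneg: "0 \<le> vnorm v"
  unfolding vnorm_def by (intro real_sqrt_ge_zero sum_nonneg) auto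

lemma abs_scalar_prod_le_vnorm:
  assumes "u \<in> carrier_vec m" "v \<in> carrier_vec m"
  shows "\<bar>u \<bullet> v\<bar> \<le> (\<Sum>l<m. \<bar>u $ l\<bar>) * vnorm v"
proof -
  have "\<bar>u \<bullet> v\<bar> \<le> (\<Sum>l<m. \<bar>u $ l * v $ l\<bar>)"
    using assms unfolding scalar_prod_def by (simp add: atLeast0LessThan sum_abs)
  also have "\<dots> \<le> (\<Sum>l<m. \<bar>u $ l\<bar> * vnorm v)"
    using assms abs_index_le_vnorm[of _ v]
    by (intro sum_mono) (simp add: abs_mult mult_left_mono)
  finally show ?thesis by (simp add: sum_distrib_right)
qed

lemma exists_power_weights_nonzero:
  fixes W :: "(nat \<Rightarrow> real) set" and J :: "nat set"
  assumes fin: "finite W" and nz: "\<And>w. w \<in> W \<Longrightarrow> \<exists>l<d. l \<notin> J \<and> w l \<noteq> 0"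
  shows "\<exists>s>0. \<forall>w\<in>W. (\<Sum>l<d. w l * (if l \<in> J then 0 else s ^ l)) \<noteq> 0"
proof -
  define q :: "(nat \<Rightarrow> real) \<Rightarrow> real poly"
    where "q w = (\<Sum>l<d. monom (if l \<in> J then 0 else w l) l)" for w
  have poly_q: "poly (q w) s = (\<Sum>l<d. w l * (if l \<in> J then 0 else s ^ l))" for w s
    unfolding q_def poly_sum poly_monom by (intro sum.cong) auto
  have "q w \<noteq> 0" if w: "w \<in> W" for w
  proof -
    obtain l where l: "l < d" "l \<notin> J" "w l \<noteq> 0" using nz[OF w] by blast
    have "coeff (q w) l = w l"
      using l unfolding q_def coeff_sum coeff_monom by (simp add: if_distrib cong: if_cong)
    then show ?thesis using l by auto
  qed
  then have fin_roots: "finite (\<Union>w\<in>W. {s. poly (q w) s = 0})" using fin poly_roots_finite by blast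
  define s where "s = Max (insert 0 (\<Union>w\<in>W. {s. poly (q w) s = 0})) + 1"
  have "x < s" if "x \<in> insert 0 (\<Union>w\<in>W. {s. poly (q w) s = 0})" for x
    using Max_ge[OF finite.insertI[OF fin_roots] that] unfolding s_def by simp
  then have "s > 0" "\<forall>w\<in>W. poly (q w) s \<noteq> 0" by auto
  then show ?thesis using poly_q by auto
qed

lemma exists_small_step_sign_preserving:
  fixes r g :: "'a \<Rightarrow> real"
  assumes fin: "finite Q" and g: "\<And>q. q \<in> Q \<Longrightarrow> g q \<noteq> 0"
  shows "\<exists>t>0. \<forall>q\<in>Q. r q + t * g q \<noteq> 0 \<and> (0 \<le> r q + t * g q \<longrightarrow> 0 \<le> r q)"
proof -
  have "\<forall>\<^sub>F t in at_right 0. r q + t * g q \<noteq> 0 \<and> (0 \<le> r q + t * g q \<longrightarrow> 0 \<le> r q)"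
    if "q \<in> Q" for q
  proof -
    have lim: "((\<lambda>t. r q + t * g q) \<longlongrightarrow> r q) (at_right 0)"
      by (auto intro!: tendsto_eq_intros)
    consider "r q < 0" | "r q = 0" | "r q > 0" by linarith
    then show ?thesis
    proof cases
      case 1
      show ?thesis by (rule eventually_mono[OF order_tendstoD(2)[OF lim 1]]) (use 1 in auto)
    next
      case 2
      show ?thesis by (rule eventually_mono[OF eventually_at_right_less]) (use 2 g[OF that] in auto)
    next
      case 3
      show ?thesis by (rule eventually_mono[OF order_tendstoD(1)[OF lim 3]]) (use 3 in auto)
    qed
  qed
  then have "\<forall>\<^sub>F t in at_right 0. 0 < t \<and>
      (\<forall>q\<in>Q. r q + t * g q \<noteq> 0 \<and> (0 \<le> r q + t * g q \<longrightarrow> 0 \<le> r q))"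
    using fin by (intro eventually_conj eventually_at_right_less eventually_ball_finite) auto
  then show ?thesis using eventually_happens'[OF trivial_limit_at_right_real] by blast
qed

context
  fixes A :: "real mat" and m d :: nat
  assumes A: "A \<in> carrier_mat m d"
begin

section \<open>Bases and basic solutions\<close>

lemma col_carrier: "col A i \<in> carrier_vec m"
  using col_dim[of A i] carrier_matD(1)[OF A] by simp

lemma col_submat_carrier:
  assumes "I \<subseteq> {..<d}" "card I = m"
  shows "col_submat A I \<in> carrier_mat m m"
proof -
  have "{j. j < dim_col A \<and> j \<in> I} = I" "{i. i < dim_row A \<and> i \<in> (UNIV::nat set)} = {..<m}"
    using assms A by auto
  then show ?thesis unfolding col_submat_def carrier_mat_def using assms by (simp add: dim_submatrix)
qed

lemma col_submat_index:
  assumes "I \<subseteq> {..<d}" "card I = m" and "i < m" "k < m"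
  shows "col_submat A I $$ (i,k) = A $$ (i, pick I k)"
proof -
  have "{j. j < dim_col A \<and> j \<in> I} = I" "{i. i < dim_row A \<and> i \<in> (UNIV::nat set)} = {..<m}"
    using assms A by auto
  then show ?thesis unfolding col_submat_def using assms
    by (subst submatrix_index) (auto simp: pick_UNIV)
qed

lemma col_col_submat:
  assumes I: "I \<subseteq> {..<d}" "card I = m" and k: "k < m"
  shows "col (col_submat A I) k = col A (pick I k)"
proof -
  have "pick I k < d" using k I pick_in_set_le by auto
  then show ?thesis
    using A k col_submat_carrier[OF I] col_submat_index[OF I] by (intro eq_vecI) auto
qed

lemma col_submat_mult_mat_vec:
  assumes I: "I \<subseteq> {..<d}" "card I = m" and u: "u \<in> carrier_vec m"
  shows "col_submat A I *\<^sub>v u = A *\<^sub>v scatter_vec d I u"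
proof (rule eq_vecI)
  have fI: "finite I" using I finite_subset by blast
  have B: "col_submat A I \<in> carrier_mat m m" by (rule col_submat_carrier[OF I])
  show "dim_vec (col_submat A I *\<^sub>v u) = dim_vec (A *\<^sub>v scatter_vec d I u)" using A B by auto
  fix i assume "i < dim_vec (A *\<^sub>v scatter_vec d I u)"
  then have i: "i < m" using A by auto
  have "(col_submat A I *\<^sub>v u) $ i = (\<Sum>k<m. A $$ (i, pick I k) * u $ k)"
    using mult_mat_vec_index_sum[OF B u i] col_submat_index[OF I i] by simp
  also have "\<dots> = (\<Sum>j\<in>I. A $$ (i, j) * u $ card {a \<in> I. a < j})"
    using I card_pick_le pick_in_set_le pick_card_in_set card_less_than_member_less_card[OF fI]
    by (intro sum.reindex_bij_witness[where i="\<lambda>j. card {a \<in> I. a < j}" and j="pick I"]) auto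
  also have "\<dots> = (\<Sum>j<d. A $$ (i, j) * scatter_vec d I u $ j)"
    using I by (simp add: scatter_vec_def if_distrib sum.inter_restrict[symmetric]
        Int_absorb1 cong: if_cong)
  also have "\<dots> = (A *\<^sub>v scatter_vec d I u) $ i"
    using mult_mat_vec_index_sum[OF A _ i] by simp
  finally show "(col_submat A I *\<^sub>v u) $ i = (A *\<^sub>v scatter_vec d I u) $ i" .
qed

lemma is_basisD:
  assumes "is_basis A I"
  shows "I \<subseteq> {..<d}" "card I = m" "finite I" "col_submat A I \<in> carrier_mat m m"
    "invertible_mat (col_submat A I)"
  using assms col_submat_carrier A finite_subset[of I "{..<d}"] unfolding is_basis_def by auto

lemma finite_bases: "finite {I. is_basis A I}"
  by (rule finite_subset[of _ "Pow {..<d}"]) (use is_basisD in auto)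

lemma basis_kernel_trivial:
  assumes I: "is_basis A I" and x: "supported_on d I x" and Ax: "A *\<^sub>v x = 0\<^sub>v m"
  shows "x = 0\<^sub>v d"
proof -
  note I' = is_basisD[OF I]
  define B where "B = col_submat A I"
  define u where "u = vec m (\<lambda>k. x $ pick I k)"
  have x_eq: "x = scatter_vec d I u" unfolding u_def by (rule scatter_vec_gather[OF I'(1,2) x])
  have u: "u \<in> carrier_vec m" unfolding u_def by simp
  have B: "B \<in> carrier_mat m m" "minv B * B = 1\<^sub>m m" "minv B \<in> carrier_mat m m"
    using I'(4) minv_inverse[OF I'(4,5)] unfolding B_def by auto
  have "B *\<^sub>v u = 0\<^sub>v m" using col_submat_mult_mat_vec[OF I'(1,2) u] x_eq Ax unfolding B_def by simp
  then have "(minv B * B) *\<^sub>v u = 0\<^sub>v m" using B u by (subst assoc_mult_mat_vec) auto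
  then have "u = 0\<^sub>v m" using B u by simp
  then show ?thesis using x_eq scatter_vec_zero I' by metis
qed

lemma is_basisI_kernel_trivial:
  assumes I: "I \<subseteq> {..<d}" "card I = m"
    and kernel: "\<And>x. supported_on d I x \<Longrightarrow> A *\<^sub>v x = 0\<^sub>v m \<Longrightarrow> x = 0\<^sub>v d"
  shows "is_basis A I"
proof -
  let ?B = "col_submat A I"
  have B: "?B \<in> carrier_mat m m" by (rule col_submat_carrier[OF I])
  have "det ?B \<noteq> 0"
  proof
    assume "det ?B = 0"
    then obtain u where u: "u \<in> carrier_vec m" "u \<noteq> 0\<^sub>v m" "?B *\<^sub>v u = 0\<^sub>v m"
      using det_0_iff_vec_prod_zero[OF B] by auto
    then have "scatter_vec d I u = 0\<^sub>v d"
      using kernel[OF supported_on_scatter_vec] col_submat_mult_mat_vec[OF I u(1)] by simp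
    have "u = 0\<^sub>v m"
    proof (rule eq_vecI)
      fix k assume "k < dim_vec (0\<^sub>v m)"
      then have k: "k < card I" using I by simp
      then have "pick I k < d" using I(1) pick_in_set_le by blast
      then show "u $ k = 0\<^sub>v m $ k"
        using scatter_vec_index_pick[OF I(1) k, of u] \<open>scatter_vec d I u = 0\<^sub>v d\<close> k I by simp
    qed (use u in auto)
    then show False using u by simp
  qed
  then obtain C where C: "C \<in> carrier_mat m m" "C * ?B = 1\<^sub>m m" "?B * C = 1\<^sub>m m"
    using det_non_zero_imp_unit[OF B] unfolding Units_def ring_mat_def by auto
  then have "invertible_mat ?B"
    using B unfolding invertible_mat_def inverts_mat_def by (intro conjI exI[of _ C]) auto
  then show ?thesis unfolding is_basis_def using I A by auto
qed

lemma basic_sol_eq_scatter_vec: "basic_sol A I \<beta> = scatter_vec d I (minv (col_submat A I) *\<^sub>v \<beta>)"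
  using A unfolding basic_sol_def scatter_vec_def by auto

lemma supported_on_basic_sol: "supported_on d I (basic_sol A I \<beta>)"
  unfolding basic_sol_eq_scatter_vec by (rule supported_on_scatter_vec)

lemma basic_sol_carrier [simp]: "basic_sol A I \<beta> \<in> carrier_vec d"
  using supported_on_basic_sol unfolding supported_on_def by blast

lemma dim_basic_sol [simp]: "dim_vec (basic_sol A I \<beta>) = d"
  using A by (simp add: basic_sol_def)

lemma mult_basic_sol:
  assumes I: "is_basis A I" and \<beta>: "\<beta> \<in> carrier_vec m"
  shows "A *\<^sub>v basic_sol A I \<beta> = \<beta>"
proof -
  note I' = is_basisD[OF I] and inv = minv_inverse[OF I'(4,5)]
  have "A *\<^sub>v basic_sol A I \<beta> = col_submat A I *\<^sub>v (minv (col_submat A I) *\<^sub>v \<beta>)"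
    unfolding basic_sol_eq_scatter_vec using col_submat_mult_mat_vec[OF I'(1,2)] inv \<beta> by auto
  also have "\<dots> = \<beta>" using inv \<beta> I'(4) by (subst assoc_mult_mat_vec[symmetric]) auto
  finally show ?thesis .
qed

lemma basic_sol_unique:
  assumes I: "is_basis A I" and \<beta>: "\<beta> \<in> carrier_vec m"
    and x: "supported_on d I x" and Ax: "A *\<^sub>v x = \<beta>"
  shows "x = basic_sol A I \<beta>"
proof -
  have xc: "x \<in> carrier_vec d" using x unfolding supported_on_def by blast
  have "A *\<^sub>v (x - basic_sol A I \<beta>) = 0\<^sub>v m"
    using mult_minus_distrib_mat_vec[OF A xc basic_sol_carrier] Ax mult_basic_sol[OF I \<beta>] \<beta> by auto
  then have "x - basic_sol A I \<beta> = 0\<^sub>v d"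
    using basis_kernel_trivial[OF I supported_on_diff[OF x supported_on_basic_sol]] by blast
  then have "x $ i = basic_sol A I \<beta> $ i" if "i < d" for i
  proof -
    have "(x - basic_sol A I \<beta>) $ i = 0" using that \<open>x - basic_sol A I \<beta> = 0\<^sub>v d\<close> by simp
    then show ?thesis using that by simp
  qed
  then show ?thesis using xc by (intro eq_vecI) auto
qed

section \<open>Dual multipliers and reduced costs\<close>

lemma restrict_vec_carrier: "is_basis A I \<Longrightarrow> restrict_vec c I \<in> carrier_vec m"
  using is_basisD(2) unfolding restrict_vec_def by simp

lemma dual_mult_carrier: "is_basis A I \<Longrightarrow> dual_mult A c I \<in> carrier_vec m"
  using minv_inverse(1)[OF is_basisD(4,5)] restrict_vec_carrier unfolding dual_mult_def
  by (intro mult_mat_vec_carrier[of _ m m]) auto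

lemma col_scalar_prod_dual_mult:
  assumes I: "is_basis A I" and i: "i \<in> I"
  shows "col A i \<bullet> dual_mult A c I = c $ i"
proof -
  note I' = is_basisD[OF I] and inv = minv_inverse[OF I'(4,5)]
  define B where "B = col_submat A I"
  define k where "k = card {a \<in> I. a < i}"
  have k: "k < m" "pick I k = i"
    using card_less_than_member_less_card[OF I'(3) i] I' pick_card_in_set[OF i] unfolding k_def by auto
  have cI: "restrict_vec c I \<in> carrier_vec m" by (rule restrict_vec_carrier[OF I])
  have "transpose_mat B *\<^sub>v dual_mult A c I
      = (transpose_mat B * transpose_mat (minv B)) *\<^sub>v restrict_vec c I"
    unfolding dual_mult_def B_def using inv I'(4) cI by (subst assoc_mult_mat_vec) auto
  also have "transpose_mat B * transpose_mat (minv B) = 1\<^sub>m m"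
    using transpose_mult[OF inv(1) I'(4)] inv unfolding B_def by simp
  finally have "transpose_mat B *\<^sub>v dual_mult A c I = restrict_vec c I" using cI by simp
  then have "(transpose_mat B *\<^sub>v dual_mult A c I) $ k = c $ i"
    using k I' unfolding restrict_vec_def by simp
  then show ?thesis using k I'(4) col_col_submat[OF I'(1,2) k(1)] unfolding B_def by simp
qed

lemma dual_mult_unique:
  assumes I: "is_basis A I" and \<mu>: "\<mu> \<in> carrier_vec m"
    and eq: "\<And>i. i \<in> I \<Longrightarrow> col A i \<bullet> \<mu> = c $ i"
  shows "\<mu> = dual_mult A c I"
proof -
  note I' = is_basisD[OF I] and inv = minv_inverse[OF I'(4,5)]
  define B where "B = col_submat A I"
  have cI: "restrict_vec c I \<in> carrier_vec m" by (rule restrict_vec_carrier[OF I])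
  have Bmu: "transpose_mat B *\<^sub>v \<mu> = restrict_vec c I"
  proof (rule eq_vecI)
    fix k assume "k < dim_vec (restrict_vec c I)"
    then have k: "k < m" using cI by simp
    then have "pick I k \<in> I" using I' pick_in_set_le by simp
    then show "(transpose_mat B *\<^sub>v \<mu>) $ k = restrict_vec c I $ k"
      using k I'(2,4) col_col_submat[OF I'(1,2) k] eq unfolding restrict_vec_def B_def by simp
  qed (use I'(4) cI in \<open>simp add: B_def\<close>)
  have "dual_mult A c I = transpose_mat (minv B) *\<^sub>v (transpose_mat B *\<^sub>v \<mu>)"
    unfolding dual_mult_def B_def[symmetric] Bmu ..
  also have "\<dots> = (transpose_mat (minv B) * transpose_mat B) *\<^sub>v \<mu>"
    using inv I'(4) \<mu> unfolding B_def by (subst assoc_mult_mat_vec) auto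
  also have "transpose_mat (minv B) * transpose_mat B = 1\<^sub>m m"
    using transpose_mult[OF I'(4) inv(1)] inv unfolding B_def by simp
  finally show ?thesis using \<mu> by simp
qed

lemma dual_mult_eq_zero:
  assumes I: "is_basis A I" and c: "\<And>i. i \<in> I \<Longrightarrow> c $ i = 0"
  shows "dual_mult A c I = 0\<^sub>v m"
proof -
  have "0\<^sub>v m = dual_mult A c I"
  proof (rule dual_mult_unique[OF I])
    fix i assume "i \<in> I"
    show "col A i \<bullet> 0\<^sub>v m = c $ i" using c[OF \<open>i \<in> I\<close>] col_carrier by simp
  qed simp
  then show ?thesis by simp
qed

lemma mult_mat_vec_scalar_prod_dual_mult:
  assumes I: "is_basis A I" and x: "supported_on d I x" and c: "c \<in> carrier_vec d"
  shows "(A *\<^sub>v x) \<bullet> dual_mult A c I = c \<bullet> x"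
proof -
  have xc: "x \<in> carrier_vec d" using x unfolding supported_on_def by blast
  have "(A *\<^sub>v x) \<bullet> dual_mult A c I = (\<Sum>j<d. x $ j * (col A j \<bullet> dual_mult A c I))"
    by (rule mult_mat_vec_scalar_prod[OF A xc dual_mult_carrier[OF I]])
  also have "\<dots> = (\<Sum>j<d. c $ j * x $ j)"
    using x col_scalar_prod_dual_mult[OF I] unfolding supported_on_def
    by (intro sum.cong) (auto simp: mult.commute)
  also have "\<dots> = c \<bullet> x" using xc by (simp add: scalar_prod_def atLeast0LessThan)
  finally show ?thesis .
qed

lemma basic_sol_index_eq_scalar_prod:
  assumes I: "is_basis A I" and \<beta>: "\<beta> \<in> carrier_vec m" and k: "k \<in> I"
  shows "basic_sol A I \<beta> $ k = dual_mult A (unit_vec d k) I \<bullet> \<beta>"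
proof -
  have "k < d" using k is_basisD(1)[OF I] by auto
  then have "basic_sol A I \<beta> $ k = unit_vec d k \<bullet> basic_sol A I \<beta>" by simp
  also have "\<dots> = \<beta> \<bullet> dual_mult A (unit_vec d k) I"
    using mult_mat_vec_scalar_prod_dual_mult[OF I supported_on_basic_sol[of I \<beta>], of "unit_vec d k"]
      mult_basic_sol[OF I \<beta>] by simp
  finally show ?thesis using comm_scalar_prod[OF \<beta> dual_mult_carrier[OF I]] by simp
qed

lemma dual_feasible_iff_reduced_cost_nonneg:
  assumes I: "is_basis A I" and c: "c \<in> carrier_vec d"
  shows "dual_feasible A c I \<longleftrightarrow> (\<forall>j<d. 0 \<le> reduced_cost A c I j)"
  using A c dual_mult_carrier[OF I]
  unfolding dual_feasible_def reduced_cost_def less_eq_vec_def by auto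

lemma reduced_cost_basic:
  assumes "is_basis A I" "j \<in> I"
  shows "reduced_cost A c I j = 0"
  using col_scalar_prod_dual_mult[OF assms] unfolding reduced_cost_def by simp

lemma mult_mat_vec_unit_vec: "j < d \<Longrightarrow> A *\<^sub>v unit_vec d j = col A j"
  using A by (intro eq_vecI) auto

lemma basic_direction_eq: "basic_direction A I j = unit_vec d j - basic_sol A I (col A j)"
  using A unfolding basic_direction_def by simp

lemma basic_direction_carrier [simp]: "basic_direction A I j \<in> carrier_vec d"
  unfolding basic_direction_eq by simp

lemma mult_basic_direction:
  assumes I: "is_basis A I" and j: "j < d"
  shows "A *\<^sub>v basic_direction A I j = 0\<^sub>v m"
proof -
  have cj: "col A j \<in> carrier_vec m" using A j by simp
  have "A *\<^sub>v basic_direction A I j = A *\<^sub>v unit_vec d j - A *\<^sub>v basic_sol A I (col A j)"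
    unfolding basic_direction_eq by (rule mult_minus_distrib_mat_vec[OF A]) auto
  also have "\<dots> = col A j - col A j"
    unfolding mult_mat_vec_unit_vec[OF j] mult_basic_sol[OF I cj] ..
  finally show ?thesis using cj by simp
qed

lemma basic_direction_index:
  assumes "l < d"
  shows "basic_direction A I j $ l = (if l = j then 1 else 0) - basic_sol A I (col A j) $ l"
  using assms unfolding basic_direction_eq unit_vec_def by simp

lemma reduced_cost_eq_scalar_prod_basic_direction:
  assumes I: "is_basis A I" and c: "c \<in> carrier_vec d" and j: "j < d"
  shows "reduced_cost A c I j = c \<bullet> basic_direction A I j"
proof -
  have cj: "col A j \<in> carrier_vec m" using A j by simp
  have "col A j \<bullet> dual_mult A c I = c \<bullet> basic_sol A I (col A j)"
    using mult_mat_vec_scalar_prod_dual_mult[OF I supported_on_basic_sol[of I "col A j"] c]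
      mult_basic_sol[OF I cj] by simp
  moreover have "c \<bullet> basic_direction A I j = c $ j - c \<bullet> basic_sol A I (col A j)"
    unfolding basic_direction_eq using j by (subst scalar_prod_minus_distrib[OF c]) auto
  ultimately show ?thesis unfolding reduced_cost_def by simp
qed

lemma reduced_cost_add_smult:
  assumes I: "is_basis A I" and c: "c \<in> carrier_vec d" and p: "p \<in> carrier_vec d" and j: "j < d"
  shows "reduced_cost A (c + t \<cdot>\<^sub>v p) I j = reduced_cost A c I j + t * reduced_cost A p I j"
  using c p by (simp add: reduced_cost_eq_scalar_prod_basic_direction[OF I _ j] add_scalar_prod_distrib)

lemma basic_sol_optimal:
  assumes I: "is_basis A I" and c: "c \<in> carrier_vec d" and dual: "dual_feasible A c I"
    and \<beta>: "\<beta> \<in> carrier_vec m" and nonneg: "0\<^sub>v d \<le> basic_sol A I \<beta>"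
  shows "basic_sol A I \<beta> \<in> opt_set A c \<beta>"
proof -
  define x where "x = basic_sol A I \<beta>"
  define \<pi> where "\<pi> = dual_mult A c I"
  have dim_col: "dim_col A = d" using A by simp
  have x: "x \<in> feas_set A \<beta>"
    using nonneg mult_basic_sol[OF I \<beta>] unfolding feas_set_def dim_col x_def by simp
  have "c \<bullet> x \<le> c \<bullet> y" if y: "y \<in> feas_set A \<beta>" for y
  proof -
    have yc: "y \<in> carrier_vec d" and Ay: "A *\<^sub>v y = \<beta>" and yle: "0\<^sub>v d \<le> y"
      using y unfolding feas_set_def dim_col by auto
    have y0: "0 \<le> y $ l" if "l < d" for l
      using yle that yc unfolding less_eq_vec_def by auto
    have "c \<bullet> x = (A *\<^sub>v x) \<bullet> \<pi>"
      using mult_mat_vec_scalar_prod_dual_mult[OF I supported_on_basic_sol[of I \<beta>] c]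
      unfolding x_def \<pi>_def by simp
    also have "\<dots> = (A *\<^sub>v y) \<bullet> \<pi>" unfolding x_def mult_basic_sol[OF I \<beta>] Ay ..
    also have "\<dots> = (\<Sum>l<d. y $ l * (col A l \<bullet> \<pi>))"
      unfolding \<pi>_def by (rule mult_mat_vec_scalar_prod[OF A yc dual_mult_carrier[OF I]])
    also have "\<dots> \<le> (\<Sum>l<d. y $ l * c $ l)"
    proof (rule sum_mono)
      fix l assume "l \<in> {..<d}"
      then have "col A l \<bullet> \<pi> \<le> c $ l"
        using dual dual_feasible_iff_reduced_cost_nonneg[OF I c]
        unfolding reduced_cost_def \<pi>_def by simp
      then show "y $ l * (col A l \<bullet> \<pi>) \<le> y $ l * c $ l"
        using y0 \<open>l \<in> {..<d}\<close> by (simp add: mult_left_mono)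
    qed
    also have "\<dots> = c \<bullet> y" using yc by (simp add: scalar_prod_def atLeast0LessThan mult.commute)
    finally show ?thesis .
  qed
  then show ?thesis using x unfolding opt_set_def x_def by blast
qed

section \<open>Dual simplex pivots\<close>

lemma is_basis_exchange:
  assumes I: "is_basis A I" and k: "k \<in> I" and j: "j < d" "j \<notin> I"
    and pivot: "basic_sol A I (col A j) $ k \<noteq> 0"
  shows "is_basis A (insert j (I - {k}))"
proof -
  note I' = is_basisD[OF I]
  define w where "w = basic_direction A I j"
  have w: "w \<in> carrier_vec d" "A *\<^sub>v w = 0\<^sub>v m"
    unfolding w_def using mult_basic_direction[OF I j(1)] by auto
  have w_index: "w $ l = (if l = j then 1 else 0) - basic_sol A I (col A j) $ l" if "l < d" for l
    unfolding w_def using basic_direction_index[OF that] .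
  have z_off: "basic_sol A I (col A j) $ l = 0" if "l < d" "l \<notin> I" for l
    using that supported_on_basic_sol unfolding supported_on_def by blast
  show ?thesis
  proof (rule is_basisI_kernel_trivial)
    show "insert j (I - {k}) \<subseteq> {..<d}" using I'(1) j by auto
    have "0 < m" using I'(2,3) k card_gt_0_iff by blast
    then show "card (insert j (I - {k})) = m" using I'(2,3) k j by (simp add: card_Diff_singleton)
    fix y assume y: "supported_on d (insert j (I - {k})) y" and Ay: "A *\<^sub>v y = 0\<^sub>v m"
    have yc: "y \<in> carrier_vec d" using y unfolding supported_on_def by blast
    define y' where "y' = y - y $ j \<cdot>\<^sub>v w"
    have y'_index: "y' $ l = y $ l - y $ j * w $ l" if "l < d" for l
      using that yc w unfolding y'_def by simp
    have "supported_on d I y'"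
      unfolding supported_on_def
    proof (intro conjI allI impI)
      show "y' \<in> carrier_vec d" using yc w unfolding y'_def by simp
      fix l assume l: "l < d" "l \<notin> I"
      show "y' $ l = 0"
        using l y z_off[OF l] j unfolding y'_index[OF l(1)] w_index[OF l(1)] supported_on_def
        by auto
    qed
    moreover have "A *\<^sub>v y' = 0\<^sub>v m"
      unfolding y'_def using yc w Ay by (simp add: mult_minus_distrib_mat_vec[OF A] mult_mat_vec[OF A], intro eq_vecI, auto)
    ultimately have y': "y' = 0\<^sub>v d" by (rule basis_kernel_trivial[OF I])
    have "k < d" "k \<noteq> j" using k I'(1) j by auto
    then have "y $ j * basic_sol A I (col A j) $ k = 0"
      using y'_index[of k] w_index[of k] y' y unfolding supported_on_def by simp
    then have yj: "y $ j = 0" using pivot by simp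
    have "y' = y" unfolding y'_def yj using yc w by (intro eq_vecI) auto
    then show "y = 0\<^sub>v d" using y' by simp
  qed
qed

text \<open>The multiplier vector of a negative basic coordinate would otherwise be a Farkas certificate
  of infeasibility of \<open>A x = \<beta>, x \<ge> 0\<close>.\<close>

lemma exists_entering_column:
  assumes I: "is_basis A I" and \<beta>: "\<beta> \<in> carrier_vec m" and feasible: "feas_set A \<beta> \<noteq> {}"
    and k: "k \<in> I" and neg: "basic_sol A I \<beta> $ k < 0"
  shows "\<exists>j<d. col A j \<bullet> dual_mult A (unit_vec d k) I < 0"
proof (rule ccontr)
  assume "\<not> ?thesis"
  then have nonneg: "0 \<le> col A j \<bullet> dual_mult A (unit_vec d k) I" if "j < d" for j
    using that by (metis not_less)
  obtain y where y: "y \<in> feas_set A \<beta>" using feasible by blast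
  have yc: "y \<in> carrier_vec d" and Ay: "A *\<^sub>v y = \<beta>" and yle: "0\<^sub>v d \<le> y"
    using y A unfolding feas_set_def by auto
  have "basic_sol A I \<beta> $ k = (A *\<^sub>v y) \<bullet> dual_mult A (unit_vec d k) I"
    using basic_sol_index_eq_scalar_prod[OF I \<beta> k] comm_scalar_prod[OF \<beta> dual_mult_carrier[OF I]]
    unfolding Ay by simp
  also have "\<dots> = (\<Sum>l<d. y $ l * (col A l \<bullet> dual_mult A (unit_vec d k) I))"
    by (rule mult_mat_vec_scalar_prod[OF A yc dual_mult_carrier[OF I]])
  also have "\<dots> \<ge> 0"
    using yle yc nonneg unfolding less_eq_vec_def by (intro sum_nonneg mult_nonneg_nonneg) auto
  finally show False using neg by simp
qed

lemma dual_mult_exchange: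
  assumes I: "is_basis A I" and k: "k \<in> I" and j: "j < d" "j \<notin> I"
    and pivot: "col A j \<bullet> dual_mult A (unit_vec d k) I \<noteq> 0"
  shows "is_basis A (insert j (I - {k}))"
    and "dual_mult A c (insert j (I - {k})) = dual_mult A c I +
      (reduced_cost A c I j / (col A j \<bullet> dual_mult A (unit_vec d k) I)) \<cdot>\<^sub>v dual_mult A (unit_vec d k) I"
proof -
  define \<sigma> where "\<sigma> = reduced_cost A c I j / (col A j \<bullet> dual_mult A (unit_vec d k) I)"
  define \<pi> where "\<pi> = dual_mult A c I"
  define \<rho> where "\<rho> = dual_mult A (unit_vec d k) I"
  have \<pi>: "\<pi> \<in> carrier_vec m" and \<rho>: "\<rho> \<in> carrier_vec m"
    unfolding \<pi>_def \<rho>_def by (simp_all add: dual_mult_carrier[OF I])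
  have "k < d" using k is_basisD(1)[OF I] by auto
  have "basic_sol A I (col A j) $ k = col A j \<bullet> \<rho>"
    using basic_sol_index_eq_scalar_prod[OF I col_carrier k] comm_scalar_prod[OF \<rho> col_carrier] unfolding \<rho>_def by simp
  then show I': "is_basis A (insert j (I - {k}))"
    using is_basis_exchange[OF I k j] pivot unfolding \<rho>_def by simp
  have prod: "col A i \<bullet> (\<pi> + \<sigma> \<cdot>\<^sub>v \<rho>) = col A i \<bullet> \<pi> + \<sigma> * (col A i \<bullet> \<rho>)" for i
    using \<pi> \<rho> by (simp add: scalar_prod_add_distrib[OF col_carrier] scalar_prod_smult_distrib[OF col_carrier])
  have "dual_mult A c (insert j (I - {k})) = \<pi> + \<sigma> \<cdot>\<^sub>v \<rho>"
  proof (rule dual_mult_unique[OF I', symmetric])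
    show "\<pi> + \<sigma> \<cdot>\<^sub>v \<rho> \<in> carrier_vec m" using \<pi> \<rho> by simp
    fix i assume "i \<in> insert j (I - {k})"
    then consider "i = j" | "i \<in> I" "i \<noteq> k" by blast
    then show "col A i \<bullet> (\<pi> + \<sigma> \<cdot>\<^sub>v \<rho>) = c $ i"
    proof cases
      case 1
      then show ?thesis using prod pivot unfolding \<sigma>_def \<pi>_def \<rho>_def reduced_cost_def by simp
    next
      case 2
      then have "col A i \<bullet> \<rho> = 0"
        using col_scalar_prod_dual_mult[OF I \<open>i \<in> I\<close>] \<open>k < d\<close> is_basisD(1)[OF I] unfolding \<rho>_def by auto
      then show ?thesis using prod col_scalar_prod_dual_mult[OF I \<open>i \<in> I\<close>] unfolding \<pi>_def by simp
    qed
  qed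
  then show "dual_mult A c (insert j (I - {k})) = dual_mult A c I +
      (reduced_cost A c I j / (col A j \<bullet> dual_mult A (unit_vec d k) I)) \<cdot>\<^sub>v dual_mult A (unit_vec d k) I"
    unfolding \<sigma>_def \<pi>_def \<rho>_def .
qed

lemma dual_ratio_test:
  assumes I: "is_basis A I" and \<beta>: "\<beta> \<in> carrier_vec m" and feasible: "feas_set A \<beta> \<noteq> {}"
    and k: "k \<in> I" and neg: "basic_sol A I \<beta> $ k < 0"
  defines "\<alpha> i \<equiv> col A i \<bullet> dual_mult A (unit_vec d k) I"
  obtains j where "j < d" "j \<notin> I" "\<alpha> j < 0"
    "\<And>i. i < d \<Longrightarrow> \<alpha> i < 0 \<Longrightarrow> reduced_cost A c I i / \<alpha> i \<le> reduced_cost A c I j / \<alpha> j"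
proof -
  define f where "f i = reduced_cost A c I i / \<alpha> i" for i
  define N where "N = {j. j < d \<and> \<alpha> j < 0}"
  have "N \<noteq> {}" using exists_entering_column[OF I \<beta> feasible k neg] unfolding N_def \<alpha>_def by blast
  moreover have "finite N" unfolding N_def by simp
  ultimately have "Max (f ` N) \<in> f ` N" by simp
  then obtain j where "j \<in> N" and max: "f j = Max (f ` N)" by auto
  have "f i \<le> f j" if "i \<in> N" for i unfolding max using \<open>finite N\<close> that by (intro Max_ge) auto
  moreover have "j < d" "\<alpha> j < 0" using \<open>j \<in> N\<close> unfolding N_def by auto
  moreover have "j \<notin> I"
  proof
    assume "j \<in> I"
    then have "\<alpha> j = unit_vec d k $ j" using col_scalar_prod_dual_mult[OF I] unfolding \<alpha>_def by simp
    then show False using \<open>\<alpha> j < 0\<close> \<open>j < d\<close> k is_basisD(1)[OF I] by (auto split: if_splits)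
  qed
  ultimately show ?thesis using that unfolding f_def N_def by blast
qed

text \<open>One step of the dual simplex method: the basic coordinate \<open>k\<close> leaves, the column chosen by
  the ratio test enters, and dual nondegeneracy makes the step length, hence the gain in the dual
  objective, strictly positive.\<close>

lemma dual_pivot:
  assumes I: "is_basis A I" and c: "c \<in> carrier_vec d" and dual: "dual_feasible A c I"
    and nondeg: "\<And>j. j < d \<Longrightarrow> j \<notin> I \<Longrightarrow> reduced_cost A c I j \<noteq> 0"
    and \<beta>: "\<beta> \<in> carrier_vec m" and feasible: "feas_set A \<beta> \<noteq> {}"
    and k: "k \<in> I" and neg: "basic_sol A I \<beta> $ k < 0"
  obtains j where "is_basis A (insert j (I - {k}))" "dual_feasible A c (insert j (I - {k}))"
    "\<beta> \<bullet> dual_mult A c I < \<beta> \<bullet> dual_mult A c (insert j (I - {k}))"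
proof -
  define \<rho> where "\<rho> = dual_mult A (unit_vec d k) I"
  define \<alpha> where "\<alpha> j = col A j \<bullet> \<rho>" for j
  define r where "r j = reduced_cost A c I j" for j
  have \<rho>: "\<rho> \<in> carrier_vec m" unfolding \<rho>_def by (rule dual_mult_carrier[OF I])
  have r_nonneg: "0 \<le> r j" if "j < d" for j
    using dual dual_feasible_iff_reduced_cost_nonneg[OF I c] that unfolding r_def by blast
  obtain j where "j < d" "j \<notin> I" "\<alpha> j < 0"
    and ratio: "\<And>i. i < d \<Longrightarrow> \<alpha> i < 0 \<Longrightarrow> r i / \<alpha> i \<le> r j / \<alpha> j"
    using dual_ratio_test[OF I \<beta> feasible k neg] unfolding \<alpha>_def \<rho>_def r_def by blast
  define \<sigma> where "\<sigma> = r j / \<alpha> j"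
  have "\<sigma> < 0"
    using r_nonneg[OF \<open>j < d\<close>] nondeg[OF \<open>j < d\<close> \<open>j \<notin> I\<close>] \<open>\<alpha> j < 0\<close>
    unfolding \<sigma>_def r_def by (simp add: divide_pos_neg)
  define I' where "I' = insert j (I - {k})"
  have pivot: "col A j \<bullet> dual_mult A (unit_vec d k) I \<noteq> 0"
    using \<open>\<alpha> j < 0\<close> unfolding \<alpha>_def \<rho>_def by simp
  note exchange = dual_mult_exchange[OF I k \<open>j < d\<close> \<open>j \<notin> I\<close> pivot]
  have I': "is_basis A I'" unfolding I'_def by (rule exchange(1))
  have \<pi>: "dual_mult A c I \<in> carrier_vec m" by (rule dual_mult_carrier[OF I])
  have new: "dual_mult A c I' = dual_mult A c I + \<sigma> \<cdot>\<^sub>v \<rho>"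
    using exchange(2) unfolding I'_def \<sigma>_def r_def \<alpha>_def \<rho>_def .
  have "dual_feasible A c I'"
    unfolding dual_feasible_iff_reduced_cost_nonneg[OF I' c]
  proof (intro allI impI)
    fix i assume "i < d"
    have "reduced_cost A c I' i = r i - \<sigma> * \<alpha> i"
      using \<pi> \<rho> unfolding reduced_cost_def r_def \<alpha>_def new
      by (simp add: scalar_prod_add_distrib[OF col_carrier] scalar_prod_smult_distrib[OF col_carrier])
    moreover have "\<sigma> * \<alpha> i \<le> r i"
    proof (cases "0 \<le> \<alpha> i")
      case True
      then show ?thesis using r_nonneg[OF \<open>i < d\<close>] mult_nonpos_nonneg[of \<sigma> "\<alpha> i"] \<open>\<sigma> < 0\<close> by simp
    next
      case False
      then have "r i / \<alpha> i \<le> \<sigma>" using ratio \<open>i < d\<close> unfolding \<sigma>_def by simp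
      then show ?thesis using False by (simp add: field_simps)
    qed
    ultimately show "0 \<le> reduced_cost A c I' i" by simp
  qed
  moreover have "\<beta> \<bullet> dual_mult A c I' = \<beta> \<bullet> dual_mult A c I + \<sigma> * (\<beta> \<bullet> \<rho>)"
    using \<pi> \<rho> unfolding new by (simp add: scalar_prod_add_distrib[OF \<beta>] scalar_prod_smult_distrib[OF \<beta>])
  moreover have "\<beta> \<bullet> \<rho> < 0"
    using neg basic_sol_index_eq_scalar_prod[OF I \<beta> k] comm_scalar_prod[OF \<beta> \<rho>] unfolding \<rho>_def by simp
  ultimately show ?thesis using that I' \<open>\<sigma> < 0\<close> mult_neg_neg unfolding I'_def by fastforce
qed

text \<open>Maximising the dual objective over the dual feasible bases containing \<open>S\<close> leaves no
  negative basic coordinate outside \<open>S\<close>, since otherwise a dual pivot would increase it.\<close>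

lemma dual_simplex_fixing_columns:
  assumes c: "c \<in> carrier_vec d" and \<beta>: "\<beta> \<in> carrier_vec m" and feasible: "feas_set A \<beta> \<noteq> {}"
    and J: "is_basis A J" "S \<subseteq> J" "dual_feasible A c J"
    and nondeg: "\<And>I j. is_basis A I \<Longrightarrow> j < d \<Longrightarrow> j \<notin> I \<Longrightarrow> reduced_cost A c I j \<noteq> 0"
  obtains I where "is_basis A I" "S \<subseteq> I" "dual_feasible A c I"
    "\<And>k. k \<in> I - S \<Longrightarrow> 0 \<le> basic_sol A I \<beta> $ k"
proof -
  define F where "F = {I. is_basis A I \<and> S \<subseteq> I \<and> dual_feasible A c I}"
  define f where "f I = \<beta> \<bullet> dual_mult A c I" for I
  have "finite F" unfolding F_def by (rule finite_subset[OF _ finite_bases]) auto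
  moreover have "F \<noteq> {}" using J unfolding F_def by blast
  ultimately obtain I where IF: "I \<in> F" and max: "\<And>I'. I' \<in> F \<Longrightarrow> f I' \<le> f I"
    using arg_min_if_finite[of F "\<lambda>I. - f I"] by (metis neg_less_iff_less not_le)
  have I: "is_basis A I" "S \<subseteq> I" "dual_feasible A c I" using IF unfolding F_def by auto
  have "0 \<le> basic_sol A I \<beta> $ k" if k: "k \<in> I - S" for k
  proof (rule ccontr)
    assume "\<not> ?thesis"
    then obtain j where "is_basis A (insert j (I - {k}))" "dual_feasible A c (insert j (I - {k}))"
      and gain: "f I < f (insert j (I - {k}))"
      using dual_pivot[OF I(1) c I(3) nondeg[OF I(1)] \<beta> feasible, of k] k
      unfolding f_def by (metis DiffD1 not_le)
    then have "insert j (I - {k}) \<in> F" using I(2) k unfolding F_def by auto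
    then show False using max gain by fastforce
  qed
  then show ?thesis using that I by blast
qed

section \<open>Perturbing the costs\<close>

lemma basic_direction_nonzero_off_basis:
  assumes J: "is_basis A J" and I: "is_basis A I" and j: "j < d" "j \<notin> I"
  shows "\<exists>l<d. l \<notin> J \<and> basic_direction A I j $ l \<noteq> 0"
proof (rule ccontr)
  assume "\<not> ?thesis"
  then have "supported_on d J (basic_direction A I j)" unfolding supported_on_def by auto
  then have "basic_direction A I j = 0\<^sub>v d"
    using basis_kernel_trivial[OF J] mult_basic_direction[OF I j(1)] by blast
  moreover have "basic_direction A I j $ j = 1"
    using basic_direction_index[OF j(1)] supported_on_basic_sol j unfolding supported_on_def by simp
  ultimately show False using j by simp
qed

text \<open>The choice \<open>p\<^sub>l = s\<^sup>l\<close> off \<open>J\<close> works for all \<open>s > 0\<close> outside the roots of finitely many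
  nonzero polynomials, one for each basis and nonbasic column.\<close>

lemma exists_generic_cost_vanishing_on_basis:
  assumes J: "is_basis A J"
  obtains p where "p \<in> carrier_vec d" "\<And>l. l < d \<Longrightarrow> 0 \<le> p $ l" "\<And>l. l \<in> J \<Longrightarrow> p $ l = 0"
    "\<And>I j. is_basis A I \<Longrightarrow> j < d \<Longrightarrow> j \<notin> I \<Longrightarrow> reduced_cost A p I j \<noteq> 0"
proof -
  define P where "P = {(I, j). is_basis A I \<and> j < d \<and> j \<notin> I}"
  have "finite P" unfolding P_def by (rule finite_subset[of _ "{I. is_basis A I} \<times> {..<d}"])
      (auto simp: finite_bases)
  define W where "W = (\<lambda>(I, j) l. basic_direction A I j $ l) ` P"
  have "finite W" unfolding W_def using \<open>finite P\<close> by simp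
  moreover have "\<exists>l<d. l \<notin> J \<and> w l \<noteq> 0" if "w \<in> W" for w
    using that basic_direction_nonzero_off_basis[OF J] unfolding W_def P_def by auto
  ultimately obtain s :: real where "s > 0"
    and s: "\<And>w. w \<in> W \<Longrightarrow> (\<Sum>l<d. w l * (if l \<in> J then 0 else s ^ l)) \<noteq> 0"
    using exists_power_weights_nonzero[of W d J] by blast
  define p where "p = vec d (\<lambda>l. if l \<in> J then 0 else s ^ l)"
  have p: "p \<in> carrier_vec d" unfolding p_def by simp
  have generic: "reduced_cost A p I j \<noteq> 0" if "is_basis A I" "j < d" "j \<notin> I" for I j
  proof -
    have "reduced_cost A p I j = (\<Sum>l<d. basic_direction A I j $ l * (if l \<in> J then 0 else s ^ l))"
      using that p
      by (auto simp: reduced_cost_eq_scalar_prod_basic_direction scalar_prod_def p_def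
          atLeast0LessThan mult.commute intro!: sum.cong)
    moreover have "(\<lambda>l. basic_direction A I j $ l) \<in> W"
      unfolding W_def P_def using that by (intro image_eqI[where x="(I, j)"]) auto
    ultimately show ?thesis using s by auto
  qed
  have nonneg: "0 \<le> p $ l" if "l < d" for l using that \<open>s > 0\<close> unfolding p_def by simp
  have zero: "p $ l = 0" if "l \<in> J" for l using that is_basisD(1)[OF J] unfolding p_def by auto
  from p nonneg zero generic show ?thesis by (rule that)
qed

lemma exists_nondegenerate_cost_perturbation:
  assumes c: "c \<in> carrier_vec d" and J: "is_basis A J" "dual_feasible A c J"
  obtains c' where "c' \<in> carrier_vec d" "dual_feasible A c' J"
    "\<And>I j. is_basis A I \<Longrightarrow> j < d \<Longrightarrow> j \<notin> I \<Longrightarrow> reduced_cost A c' I j \<noteq> 0"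
    "\<And>I. is_basis A I \<Longrightarrow> dual_feasible A c' I \<Longrightarrow> dual_feasible A c I"
proof -
  obtain p where p: "p \<in> carrier_vec d" "\<And>l. l < d \<Longrightarrow> 0 \<le> p $ l" "\<And>l. l \<in> J \<Longrightarrow> p $ l = 0"
    and generic: "\<And>I j. is_basis A I \<Longrightarrow> j < d \<Longrightarrow> j \<notin> I \<Longrightarrow> reduced_cost A p I j \<noteq> 0"
    using exists_generic_cost_vanishing_on_basis[OF J(1)] by blast
  define P where "P = {(I, j). is_basis A I \<and> j < d \<and> j \<notin> I}"
  have "finite P" unfolding P_def by (rule finite_subset[of _ "{I. is_basis A I} \<times> {..<d}"])
      (auto simp: finite_bases)
  obtain t where "t > 0" and t: "\<And>I j. (I, j) \<in> P \<Longrightarrow> reduced_cost A c I j + t * reduced_cost A p I j \<noteq> 0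
      \<and> (0 \<le> reduced_cost A c I j + t * reduced_cost A p I j \<longrightarrow> 0 \<le> reduced_cost A c I j)"
    using exists_small_step_sign_preserving[where Q=P and r="\<lambda>(I, j). reduced_cost A c I j"
        and g="\<lambda>(I, j). reduced_cost A p I j"] \<open>finite P\<close> generic unfolding P_def by fastforce
  define c' where "c' = c + t \<cdot>\<^sub>v p"
  have c': "c' \<in> carrier_vec d" unfolding c'_def using c p by simp
  have rc: "reduced_cost A c' I j = reduced_cost A c I j + t * reduced_cost A p I j"
    if "is_basis A I" "j < d" for I j
    unfolding c'_def by (rule reduced_cost_add_smult[OF that(1) c p(1) that(2)])
  have "dual_feasible A c' J"
    unfolding dual_feasible_iff_reduced_cost_nonneg[OF J(1) c']
  proof (intro allI impI)
    fix j assume "j < d"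
    have "reduced_cost A p J j = p $ j"
      using dual_mult_eq_zero[OF J(1) p(3)] unfolding reduced_cost_def by (simp add: scalar_prod_def)
    moreover have "0 \<le> reduced_cost A c J j"
      using J(2) \<open>j < d\<close> unfolding dual_feasible_iff_reduced_cost_nonneg[OF J(1) c] by blast
    ultimately show "0 \<le> reduced_cost A c' J j"
      using rc[OF J(1) \<open>j < d\<close>] p(2)[OF \<open>j < d\<close>] \<open>t > 0\<close> by simp
  qed
  moreover have "reduced_cost A c' I j \<noteq> 0" if "is_basis A I" "j < d" "j \<notin> I" for I j
    using t[of I j] rc[of I j] that unfolding P_def by simp
  moreover have "dual_feasible A c I" if I: "is_basis A I" and dual': "dual_feasible A c' I" for I
    unfolding dual_feasible_iff_reduced_cost_nonneg[OF I c]
  proof (intro allI impI)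
    fix j assume "j < d"
    show "0 \<le> reduced_cost A c I j"
    proof (cases "j \<in> I")
      case True
      then show ?thesis using reduced_cost_basic[OF I] by simp
    next
      case False
      then show ?thesis
        using t[of I j] rc[OF I \<open>j < d\<close>] dual' \<open>j < d\<close> I
        unfolding dual_feasible_iff_reduced_cost_nonneg[OF I c'] P_def by auto
    qed
  qed
  ultimately show ?thesis using that c' by blast
qed

lemma exists_dual_feasible_basis_fixing_columns:
  assumes c: "c \<in> carrier_vec d" and \<beta>: "\<beta> \<in> carrier_vec m" and feasible: "feas_set A \<beta> \<noteq> {}"
    and J: "is_basis A J" "S \<subseteq> J" "dual_feasible A c J"
  obtains I where "is_basis A I" "S \<subseteq> I" "dual_feasible A c I"
    "\<And>k. k \<in> I - S \<Longrightarrow> 0 \<le> basic_sol A I \<beta> $ k"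
proof -
  obtain c' where c': "c' \<in> carrier_vec d" "dual_feasible A c' J"
    and nondeg: "\<And>I j. is_basis A I \<Longrightarrow> j < d \<Longrightarrow> j \<notin> I \<Longrightarrow> reduced_cost A c' I j \<noteq> 0"
    and dual_c: "\<And>I. is_basis A I \<Longrightarrow> dual_feasible A c' I \<Longrightarrow> dual_feasible A c I"
    using exists_nondegenerate_cost_perturbation[OF c J(1,3)] by blast
  obtain I where "is_basis A I" "S \<subseteq> I" "dual_feasible A c' I"
    "\<And>k. k \<in> I - S \<Longrightarrow> 0 \<le> basic_sol A I \<beta> $ k"
    using dual_simplex_fixing_columns[OF c'(1) \<beta> feasible J(1,2) c'(2) nondeg] by blast
  then show ?thesis using that dual_c by blast
qed

section \<open>Stability of positive basic coordinates\<close>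

lemma basic_sol_index_lipschitz:
  assumes I: "is_basis A I" and k: "k \<in> I"
  obtains C where "0 \<le> C" "\<And>\<beta> \<beta>'. \<beta> \<in> carrier_vec m \<Longrightarrow> \<beta>' \<in> carrier_vec m \<Longrightarrow>
    \<bar>basic_sol A I \<beta>' $ k - basic_sol A I \<beta> $ k\<bar> \<le> C * vnorm (\<beta>' - \<beta>)"
proof
  define \<rho> where "\<rho> = dual_mult A (unit_vec d k) I"
  have \<rho>: "\<rho> \<in> carrier_vec m" unfolding \<rho>_def by (rule dual_mult_carrier[OF I])
  show "0 \<le> (\<Sum>l<m. \<bar>\<rho> $ l\<bar>)" by (simp add: sum_nonneg)
  fix \<beta> \<beta>' :: "real vec" assume \<beta>: "\<beta> \<in> carrier_vec m" and \<beta>': "\<beta>' \<in> carrier_vec m"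
  have "basic_sol A I \<beta>' $ k - basic_sol A I \<beta> $ k = \<rho> \<bullet> (\<beta>' - \<beta>)"
    using basic_sol_index_eq_scalar_prod[OF I _ k] \<beta> \<beta>' scalar_prod_minus_distrib[OF \<rho> \<beta>' \<beta>]
    unfolding \<rho>_def by simp
  then show "\<bar>basic_sol A I \<beta>' $ k - basic_sol A I \<beta> $ k\<bar> \<le> (\<Sum>l<m. \<bar>\<rho> $ l\<bar>) * vnorm (\<beta>' - \<beta>)"
    using abs_scalar_prod_le_vnorm[OF \<rho>, of "\<beta>' - \<beta>"] \<beta> \<beta>' by simp
qed

lemma basic_sol_positive_coords_stable:
  assumes \<beta>: "\<beta> \<in> carrier_vec m"
  shows "\<exists>\<epsilon>>0. \<forall>I \<beta>' k. is_basis A I \<longrightarrow> \<beta>' \<in> carrier_vec m \<longrightarrow> vnorm (\<beta>' - \<beta>) < \<epsilon> \<longrightarrow>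
    k \<in> I \<longrightarrow> 0 < basic_sol A I \<beta> $ k \<longrightarrow> 0 < basic_sol A I \<beta>' $ k"
proof -
  define P where "P = {(I, k). is_basis A I \<and> k \<in> I}"
  have "finite P"
    unfolding P_def by (rule finite_subset[of _ "{I. is_basis A I} \<times> {..<d}"])
      (use is_basisD(1) finite_bases in auto)
  have "\<forall>\<^sub>F \<epsilon> in at_right 0. \<forall>\<beta>'\<in>carrier_vec m. vnorm (\<beta>' - \<beta>) < \<epsilon> \<longrightarrow>
      0 < basic_sol A I \<beta> $ k \<longrightarrow> 0 < basic_sol A I \<beta>' $ k" if "(I, k) \<in> P" for I k
  proof (cases "0 < basic_sol A I \<beta> $ k")
    case True
    have I: "is_basis A I" and k: "k \<in> I" using that unfolding P_def by auto
    obtain C where "0 \<le> C" and lip: "\<And>\<beta> \<beta>'. \<beta> \<in> carrier_vec m \<Longrightarrow> \<beta>' \<in> carrier_vec m \<Longrightarrow>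
        \<bar>basic_sol A I \<beta>' $ k - basic_sol A I \<beta> $ k\<bar> \<le> C * vnorm (\<beta>' - \<beta>)"
      using basic_sol_index_lipschitz[OF I k] by blast
    have "\<forall>\<^sub>F \<epsilon> in at_right 0. \<epsilon> < basic_sol A I \<beta> $ k / (C + 1)"
      using True \<open>0 \<le> C\<close> by (intro order_tendstoD(2)[OF tendsto_ident_at]) simp
    then show ?thesis
    proof (rule eventually_mono, intro ballI impI)
      fix \<epsilon> :: real and \<beta>' :: "real vec" assume "\<epsilon> < basic_sol A I \<beta> $ k / (C + 1)"
        and \<beta>': "\<beta>' \<in> carrier_vec m" and "vnorm (\<beta>' - \<beta>) < \<epsilon>"
      then have "vnorm (\<beta>' - \<beta>) < basic_sol A I \<beta> $ k / (C + 1)" by simp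
      then have "(C + 1) * vnorm (\<beta>' - \<beta>) < basic_sol A I \<beta> $ k"
        using \<open>0 \<le> C\<close> by (simp add: field_simps)
      moreover have "C * vnorm (\<beta>' - \<beta>) \<le> (C + 1) * vnorm (\<beta>' - \<beta>)"
        using vnorm_nonneg[of "\<beta>' - \<beta>"] by (simp add: algebra_simps)
      ultimately show "0 < basic_sol A I \<beta>' $ k" using lip[OF \<beta> \<beta>'] by (simp add: abs_le_iff)
    qed
  qed simp
  then have "\<forall>\<^sub>F \<epsilon> in at_right 0. 0 < \<epsilon> \<and> (\<forall>(I, k)\<in>P. \<forall>\<beta>'\<in>carrier_vec m.
      vnorm (\<beta>' - \<beta>) < \<epsilon> \<longrightarrow> 0 < basic_sol A I \<beta> $ k \<longrightarrow> 0 < basic_sol A I \<beta>' $ k)"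
    using \<open>finite P\<close> by (intro eventually_conj eventually_at_right_less eventually_ball_finite) auto
  then obtain \<epsilon> where "0 < \<epsilon>" and "\<forall>(I, k)\<in>P. \<forall>\<beta>'\<in>carrier_vec m.
      vnorm (\<beta>' - \<beta>) < \<epsilon> \<longrightarrow> 0 < basic_sol A I \<beta> $ k \<longrightarrow> 0 < basic_sol A I \<beta>' $ k"
    using eventually_happens'[OF trivial_limit_at_right_real] by blast
  then show ?thesis unfolding P_def by blast
qed

end

theorem lemma4p2:
  fixes m d :: nat and A :: "real mat" and b c :: "real vec"
  assumes A: "A \<in> carrier_mat m d" and md: "m \<le> d"
    and rk: "vec_space.rank m A = m"
    and b: "b \<in> carrier_vec m" and c: "c \<in> carrier_vec d"
    and A1: "opt_set A c b \<noteq> {}" "vbounded (opt_set A c b)"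
    and b0: "b \<noteq> 0\<^sub>v m"
  shows "\<exists>\<epsilon>>0. \<forall>b' \<in> carrier_vec m. feas_set A b' \<noteq> {} \<longrightarrow> vnorm (b' - b) < \<epsilon> \<longrightarrow>
           (\<forall>J \<in> opt_bases A b c.
              \<exists>I \<in> {I \<in> opt_bases A b c. basic_sol A I b = basic_sol A J b}.
                basic_sol A I b' \<in> opt_set A c b')"
proof -
  obtain \<epsilon> where "\<epsilon> > 0" and stable: "\<And>I b' k. is_basis A I \<Longrightarrow> b' \<in> carrier_vec m \<Longrightarrow>
      vnorm (b' - b) < \<epsilon> \<Longrightarrow> k \<in> I \<Longrightarrow> 0 < basic_sol A I b $ k \<Longrightarrow> 0 < basic_sol A I b' $ k"
    using basic_sol_positive_coords_stable[OF A b] by blast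
  have "\<exists>I \<in> {I \<in> opt_bases A b c. basic_sol A I b = basic_sol A J b}. basic_sol A I b' \<in> opt_set A c b'"
    if b': "b' \<in> carrier_vec m" "feas_set A b' \<noteq> {}" "vnorm (b' - b) < \<epsilon>" and "J \<in> opt_bases A b c"
    for b' J
  proof -
    have J: "is_basis A J" "dual_feasible A c J" and v_nonneg: "0\<^sub>v d \<le> basic_sol A J b"
      using \<open>J \<in> opt_bases A b c\<close> A unfolding opt_bases_def by auto
    define S where "S = {k. k < d \<and> basic_sol A J b $ k \<noteq> 0}"
    have "S \<subseteq> J" using supported_on_basic_sol[OF A] unfolding S_def supported_on_def by blast
    obtain I where I: "is_basis A I" "S \<subseteq> I" "dual_feasible A c I"
      and off_S: "\<And>k. k \<in> I - S \<Longrightarrow> 0 \<le> basic_sol A I b' $ k"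
      using exists_dual_feasible_basis_fixing_columns[OF A c b'(1,2) J(1) \<open>S \<subseteq> J\<close> J(2)] by blast
    have "supported_on d I (basic_sol A J b)"
      using supported_on_basic_sol[OF A] I(2) unfolding S_def supported_on_def by blast
    then have same: "basic_sol A I b = basic_sol A J b"
      using basic_sol_unique[OF A I(1) b] mult_basic_sol[OF A J(1) b] by simp
    have "0 \<le> basic_sol A I b' $ k" if "k < d" for k
      using that off_S supported_on_basic_sol[OF A, of I b'] v_nonneg stable[OF I(1) b'(1,3), of k]
      unfolding same S_def supported_on_def less_eq_vec_def by force
    then have "0\<^sub>v d \<le> basic_sol A I b'" using A unfolding less_eq_vec_def by simp
    then show ?thesis
      using basic_sol_optimal[OF A I(1) c I(3) b'(1)] I v_nonneg same A unfolding opt_bases_def by auto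
  qed
  then show ?thesis using \<open>\<epsilon> > 0\<close> by blast
qed

end
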